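(* Let $n,m,k,r$ be positive integers. Then \begin{align*} S_{\leq m}(n,k,r)={}&S_{\leq m}(n-1,k,r-1)+(k-1)S_{\leq m}(n-1,k-1,r)+(k+r-1)S_{\leq m}(n-1,k,r)\\ &-\binom{n-1}{m}S_{\leq m}(n-m-1,k,r-1)-(k-1)\binom{n-1}{m}S_{\leq m}(n-m-1,k-1,r), \end{align*} where terms containing the factor $\binom{n-1}{m}$ are $0$ when $n-1<m$, and terms containing the factor $k-1$ are $0$ when $k=1$.
   Context: For integers $N\ge 0$, $k\ge1$, $r\ge 0$, $m\ge1$, $S_{\leq m}(N,k,r)$ is the number of ways to partition $[N]=\{1,\dots,N\}$ into $r+k-1$ non-empty blocks, each of size at most $m$, where $r$ of the blocks receive the label $1$ (blocks with label $1$ are indistinguishable among themselves) and the remaining $k-1$ blocks receive the distinct labels $2,3,\dots,k$. *)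

theory Defs
  imports Main "HOL-Library.Disjoint_Sets"
begin

text \<open>A labelled partition of {1..N}: a set B of r blocks carrying label 1
  (unordered) together with a list bs of k-1 further blocks, where the i-th entry
  of bs is the block carrying label i+2. All blocks are nonempty, pairwise distinct,
  form a partition of {1..N}, and have size at most m.\<close>
definition labeled_partitions :: "nat \<Rightarrow> nat \<Rightarrow> nat \<Rightarrow> nat \<Rightarrow> (nat set set \<times> nat set list) set" where
  "labeled_partitions m N k r =
     {(B, bs). partition_on {1..N} (B \<union> set bs) \<and> card B = r \<and> finite B
             \<and> length bs = k - 1 \<and> distinct bs \<and> B \<inter> set bs = {}
             \<and> (\<forall>X \<in> B \<union> set bs. card X \<le> m)}"

definition S_le :: "nat \<Rightarrow> nat \<Rightarrow> nat \<Rightarrow> nat \<Rightarrow> nat" where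
  "S_le m N k r = card (labeled_partitions m N k r)"

end

(*
  Classify the labelled partitions of {1..n} by the block containing n. If it is the
  singleton {n}, deleting it leaves a partition of {1..n-1} with one block of label 1
  fewer, or with one labelled block fewer; there are k - 1 positions for the deleted
  labelled block. Otherwise, deleting n from its block gives a partition p of {1..n-1}
  together with a block X of p of size < m, and n is reinserted into X. Such pairs
  number (k + r - 1) S(n-1,k,r) minus the pairs with |X| = m; counting the latter over
  the C(n-1, m) possible sets X, and removing X from p, gives the two subtracted terms.
*)

theory Submission
  imports Defs
begin

(* labeled_partitions over an arbitrary ground set, indexed by the number L = k - 1
   of distinctly labelled blocks rather than by k. *)
definition labeled_partitions_on :: "nat \<Rightarrow> 'a set \<Rightarrow> nat \<Rightarrow> nat \<Rightarrow> ('a set set \<times> 'a set list) set" where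
  "labeled_partitions_on m A L r =
     {(B, bs). partition_on A (B \<union> set bs) \<and> card B = r \<and> finite B
             \<and> length bs = L \<and> distinct bs \<and> B \<inter> set bs = {}
             \<and> (\<forall>X \<in> B \<union> set bs. card X \<le> m)}"

fun blocks :: "'a set set \<times> 'a set list \<Rightarrow> 'a set set" where
  "blocks (B, bs) = B \<union> set bs"

fun map_blocks :: "('a set \<Rightarrow> 'b set) \<Rightarrow> 'a set set \<times> 'a set list \<Rightarrow> 'b set set \<times> 'b set list" where
  "map_blocks f (B, bs) = (f ` B, map f bs)"

lemma labeled_partitions_on_block:
  "p \<in> labeled_partitions_on m A L r \<Longrightarrow> Y \<in> blocks p \<Longrightarrow> Y \<subseteq> A \<and> Y \<noteq> {}"
  unfolding labeled_partitions_on_def partition_on_def by auto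

lemma labeled_partitions_on_partition_on:
  "p \<in> labeled_partitions_on m A L r \<Longrightarrow> partition_on A (blocks p)"
  by (cases p) (simp add: labeled_partitions_on_def)

lemma labeled_partitions_on_card_block:
  "p \<in> labeled_partitions_on m A L r \<Longrightarrow> Y \<in> blocks p \<Longrightarrow> card Y \<le> m"
  by (cases p) (auto simp: labeled_partitions_on_def)

lemma finite_labeled_partitions_on:
  assumes "finite A"
  shows "finite (labeled_partitions_on m A L r)"
proof (rule finite_subset)
  show "labeled_partitions_on m A L r \<subseteq> Pow (Pow A) \<times> {bs. set bs \<subseteq> Pow A \<and> length bs = L}"
  proof
    fix p assume p: "p \<in> labeled_partitions_on m A L r"
    then have "blocks p \<subseteq> Pow A" "length (snd p) = L"
      using labeled_partitions_on_block[OF p] by (auto simp: labeled_partitions_on_def)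
    then show "p \<in> Pow (Pow A) \<times> {bs. set bs \<subseteq> Pow A \<and> length bs = L}"
      by (cases p) auto
  qed
  show "finite (Pow (Pow A) \<times> {bs. set bs \<subseteq> Pow A \<and> length bs = L})"
    using assms by (intro finite_cartesian_product finite_lists_length_eq) auto
qed

lemma card_blocks:
  assumes "p \<in> labeled_partitions_on m A L r"
  shows "card (blocks p) = L + r"
  using assms by (auto simp: labeled_partitions_on_def card_Un_disjoint distinct_card)

lemma partition_on_insert_iff:
  assumes "X \<notin> Q"
  shows "partition_on A (insert X Q) \<longleftrightarrow> partition_on (A - X) Q \<and> X \<subseteq> A \<and> X \<noteq> {}"
proof (cases "disjnt X (\<Union>Q)")
  case True
  then show ?thesis by (rule partition_on_insert)
next
  case False
  then obtain Y where Y: "Y \<in> Q" "X \<inter> Y \<noteq> {}" by (auto simp: disjnt_def)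
  then have "\<not> disjoint (insert X Q)"
    using assms by (auto simp: disjoint_def)
  moreover have "\<not> partition_on (A - X) Q"
    using Y by (auto simp: partition_on_def)
  ultimately show ?thesis by (auto dest: partition_onD2)
qed

lemma partition_on_Diff_block:
  "X \<in> Q \<Longrightarrow> partition_on A Q \<Longrightarrow> partition_on (A - X) (Q - {X})"
  using partition_on_insert_iff[of X "Q - {X}" A] by (simp add: insert_absorb)

lemma map_blocks_in_labeled_partitions_on:
  assumes p: "p \<in> labeled_partitions_on m A L r" and inj: "inj_on f (blocks p)"
    and part: "partition_on A' (f ` blocks p)" and small: "\<forall>Y \<in> blocks p. card (f Y) \<le> m"
  shows "map_blocks f p \<in> labeled_partitions_on m A' L r"
proof -
  obtain B bs where pe: "p = (B, bs)" by fastforce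
  have injB: "inj_on f B" and injbs: "inj_on f (set bs)"
    using inj unfolding pe by (auto intro: inj_on_subset)
  have "card (f ` B) = card B" "distinct (map f bs) = distinct bs"
    "f ` B \<inter> f ` set bs = f ` (B \<inter> set bs)"
    using card_image[OF injB] distinct_map[of f bs] injbs inj_on_image_Int[OF inj, of B "set bs"]
    unfolding pe by auto
  then show ?thesis
    using p part small unfolding pe by (auto simp: labeled_partitions_on_def image_Un)
qed

lemma blocks_map_blocks [simp]: "blocks (map_blocks f p) = f ` blocks p"
  by (cases p) (simp add: image_Un)

lemma map_blocks_cancel:
  "(\<And>Y. Y \<in> blocks p \<Longrightarrow> g (f Y) = Y) \<Longrightarrow> map_blocks g (map_blocks f p) = p"
  by (cases p) (simp add: image_image map_idI)

lemma image_blocks_in_labeled_partitions_on: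
  assumes h: "bij_betw h A A'" and p: "p \<in> labeled_partitions_on m A L r"
  shows "map_blocks ((`) h) p \<in> labeled_partitions_on m A' L r"
proof (rule map_blocks_in_labeled_partitions_on[OF p])
  have inj: "inj_on h A" using h by (rule bij_betw_imp_inj_on)
  have sub: "blocks p \<subseteq> Pow A" using labeled_partitions_on_block[OF p] by auto
  show "inj_on ((`) h) (blocks p)" by (rule inj_on_subset[OF inj_on_image_Pow[OF inj] sub])
  have "partition_on (h ` A) ((`) h ` blocks p - {{}})"
    by (rule partition_on_inj_image[OF labeled_partitions_on_partition_on[OF p] inj])
  moreover have "{} \<notin> (`) h ` blocks p" using labeled_partitions_on_block[OF p] by auto
  ultimately show "partition_on A' ((`) h ` blocks p)" using h by (simp add: bij_betw_def)
  show "\<forall>Y \<in> blocks p. card (h ` Y) \<le> m"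
    using labeled_partitions_on_card_block[OF p] sub inj
    by (metis PowD card_image inj_on_subset subsetD)
qed

lemma card_labeled_partitions_on_bij_betw:
  assumes h: "bij_betw h A A'"
  shows "card (labeled_partitions_on m A L r) = card (labeled_partitions_on m A' L r)"
proof (rule bij_betw_same_card[of "map_blocks ((`) h)"])
  let ?g = "inv_into A h"
  have inj: "inj_on h A" and surj: "h ` A = A'" using h by (auto simp: bij_betw_def)
  show "bij_betw (map_blocks ((`) h)) (labeled_partitions_on m A L r) (labeled_partitions_on m A' L r)"
  proof (rule bij_betw_byWitness[where f' = "map_blocks ((`) ?g)"])
    show "\<forall>p \<in> labeled_partitions_on m A L r. map_blocks ((`) ?g) (map_blocks ((`) h) p) = p"
    proof
      fix p assume p: "p \<in> labeled_partitions_on m A L r"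
      show "map_blocks ((`) ?g) (map_blocks ((`) h) p) = p"
        by (rule map_blocks_cancel)
          (use labeled_partitions_on_block[OF p] inv_into_image_cancel[OF inj] in blast)
    qed
    show "\<forall>p \<in> labeled_partitions_on m A' L r. map_blocks ((`) h) (map_blocks ((`) ?g) p) = p"
    proof
      fix p assume p: "p \<in> labeled_partitions_on m A' L r"
      show "map_blocks ((`) h) (map_blocks ((`) ?g) p) = p"
        by (rule map_blocks_cancel)
          (use labeled_partitions_on_block[OF p] image_inv_into_cancel[OF surj] in blast)
    qed
    show "map_blocks ((`) h) ` labeled_partitions_on m A L r \<subseteq> labeled_partitions_on m A' L r"
      using image_blocks_in_labeled_partitions_on[OF h] by blast
    show "map_blocks ((`) ?g) ` labeled_partitions_on m A' L r \<subseteq> labeled_partitions_on m A L r"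
      using image_blocks_in_labeled_partitions_on[OF bij_betw_inv_into[OF h]] by blast
  qed
qed

lemma S_le_eq_card_labeled_partitions_on:
  assumes "finite A" "card A = N"
  shows "S_le m N (Suc L) r = card (labeled_partitions_on m A L r)"
proof -
  obtain h where "bij_betw h A {1..N}" using assms finite_same_card_bij[of A "{1..N}"] by auto
  then show ?thesis
    by (simp add: S_le_def labeled_partitions_def card_labeled_partitions_on_bij_betw
        flip: labeled_partitions_on_def)
qed

lemma labeled_partitions_on_Diff_notin_blocks:
  "p \<in> labeled_partitions_on m (A - X) L r \<Longrightarrow> X \<noteq> {} \<Longrightarrow> X \<notin> blocks p"
  using labeled_partitions_on_block by blast

lemma insert_unlabeled_block_iff:
  assumes "X \<notin> B \<union> set bs"
  shows "(insert X B, bs) \<in> labeled_partitions_on m A L (Suc r) \<longleftrightarrow>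
         (B, bs) \<in> labeled_partitions_on m (A - X) L r \<and> X \<subseteq> A \<and> X \<noteq> {} \<and> card X \<le> m"
proof -
  have "insert X B \<union> set bs = insert X (B \<union> set bs)" by blast
  then show ?thesis
    using assms partition_on_insert_iff[OF assms, of A]
    by (auto simp: labeled_partitions_on_def card_insert_if)
qed

lemma insert_labeled_block_iff:
  assumes "X \<notin> B \<union> set (xs @ ys)"
  shows "(B, xs @ X # ys) \<in> labeled_partitions_on m A (Suc L) r \<longleftrightarrow>
         (B, xs @ ys) \<in> labeled_partitions_on m (A - X) L r \<and> X \<subseteq> A \<and> X \<noteq> {} \<and> card X \<le> m"
proof -
  have "B \<union> set (xs @ X # ys) = insert X (B \<union> set (xs @ ys))" by auto
  then show ?thesis
    using assms partition_on_insert_iff[OF assms, of A]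
    by (auto simp: labeled_partitions_on_def)
qed

lemma card_labeled_partitions_on_with_unlabeled_block:
  assumes X: "X \<subseteq> A" "X \<noteq> {}" "card X \<le> m"
  shows "card {p \<in> labeled_partitions_on m A L (Suc r). X \<in> fst p} =
         card (labeled_partitions_on m (A - X) L r)"
proof (rule bij_betw_same_card[of "\<lambda>(B, bs). (B - {X}, bs)"],
       rule bij_betw_byWitness[where f' = "\<lambda>(B, bs). (insert X B, bs)"])
  have remove: "(B - {X}, bs) \<in> labeled_partitions_on m (A - X) L r"
    if "(B, bs) \<in> labeled_partitions_on m A L (Suc r)" "X \<in> B" for B bs
  proof -
    have "X \<notin> (B - {X}) \<union> set bs"
      using that by (auto simp: labeled_partitions_on_def)
    moreover have "insert X (B - {X}) = B" using that(2) by blast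
    ultimately show ?thesis using that(1) insert_unlabeled_block_iff by metis
  qed
  have insert: "(insert X B, bs) \<in> labeled_partitions_on m A L (Suc r)" "X \<notin> B"
    if "(B, bs) \<in> labeled_partitions_on m (A - X) L r" for B bs
    using that labeled_partitions_on_Diff_notin_blocks[OF that X(2)] insert_unlabeled_block_iff[of X B bs] X by auto
  show "\<forall>p \<in> {p \<in> labeled_partitions_on m A L (Suc r). X \<in> fst p}.
          (\<lambda>(B, bs). (insert X B, bs)) ((\<lambda>(B, bs). (B - {X}, bs)) p) = p"
    by (auto simp: insert_absorb)
  show "\<forall>p \<in> labeled_partitions_on m (A - X) L r.
          (\<lambda>(B, bs). (B - {X}, bs)) ((\<lambda>(B, bs). (insert X B, bs)) p) = p"
    using insert(2) by auto
  show "(\<lambda>(B, bs). (B - {X}, bs)) ` {p \<in> labeled_partitions_on m A L (Suc r). X \<in> fst p}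
          \<subseteq> labeled_partitions_on m (A - X) L r"
    using remove by auto
  show "(\<lambda>(B, bs). (insert X B, bs)) ` labeled_partitions_on m (A - X) L r
          \<subseteq> {p \<in> labeled_partitions_on m A L (Suc r). X \<in> fst p}"
    using insert(1) by auto
qed

lemma take_append_Cons_drop_inject:
  assumes "x \<notin> set xs" "x \<notin> set ys" "i \<le> length xs" "j \<le> length ys"
    and "take i xs @ x # drop i xs = take j ys @ x # drop j ys"
  shows "i = j \<and> xs = ys"
proof -
  have "take i xs = take j ys" "drop i xs = drop j ys"
    using assms append_Cons_eq_iff[of x "take i xs" "drop i xs" "take j ys" "drop j ys"]
    by (auto dest: in_set_takeD in_set_dropD)
  then have "xs = ys" by (metis append_take_drop_id)
  moreover have "i = j"
    using \<open>take i xs = take j ys\<close> assms(3,4) by (metis length_take min_absorb2)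
  ultimately show ?thesis by simp
qed

lemma card_labeled_partitions_on_with_labeled_block:
  assumes X: "X \<subseteq> A" "X \<noteq> {}" "card X \<le> m"
  shows "card {p \<in> labeled_partitions_on m A L r. X \<in> set (snd p)} =
         L * card (labeled_partitions_on m (A - X) (L - 1) r)"
proof (cases L)
  case 0
  then have "{p \<in> labeled_partitions_on m A L r. X \<in> set (snd p)} = {}"
    by (auto simp: labeled_partitions_on_def)
  then show ?thesis using 0 by (metis card.empty mult_0)
next
  case (Suc K)
  let ?D = "{0..K} \<times> labeled_partitions_on m (A - X) K r"
  let ?ins = "\<lambda>(i, B, bs). (B, take i bs @ X # drop i bs)"
  have ins_inj: "i = j \<and> B = C \<and> bs = cs"
    if "(i, B, bs) \<in> ?D" "(j, C, cs) \<in> ?D" and "?ins (i, B, bs) = ?ins (j, C, cs)"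
    for i B bs j C cs
  proof -
    have "X \<notin> set bs" "X \<notin> set cs" "i \<le> length bs" "j \<le> length cs"
      using that(1,2) labeled_partitions_on_Diff_notin_blocks[OF _ X(2)]
      by (auto simp: labeled_partitions_on_def)
    then show ?thesis using that(3) take_append_Cons_drop_inject[of X bs cs i j] by simp
  qed
  have inj: "inj_on ?ins ?D"
    unfolding inj_on_def using ins_inj by fast
  have "?ins ` ?D = {p \<in> labeled_partitions_on m A L r. X \<in> set (snd p)}"
  proof (intro equalityI subsetI)
    fix p assume "p \<in> ?ins ` ?D"
    then obtain i B bs where p: "p = (B, take i bs @ X # drop i bs)"
      and B: "(B, bs) \<in> labeled_partitions_on m (A - X) K r" by auto
    have "X \<notin> B \<union> set (take i bs @ drop i bs)"
      using labeled_partitions_on_Diff_notin_blocks[OF B X(2)] by simp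
    then show "p \<in> {p \<in> labeled_partitions_on m A L r. X \<in> set (snd p)}"
      using insert_labeled_block_iff[of X B "take i bs" "drop i bs"] B X p Suc by simp
  next
    fix p assume p: "p \<in> {p \<in> labeled_partitions_on m A L r. X \<in> set (snd p)}"
    then obtain B bs where "p = (B, bs)" "X \<in> set bs" by (cases p) auto
    then obtain xs ys where p_eq: "p = (B, xs @ X # ys)" using split_list by fastforce
    then have "X \<notin> B \<union> set (xs @ ys)" "length xs \<le> K"
      using p Suc by (auto simp: labeled_partitions_on_def)
    then have "(length xs, B, xs @ ys) \<in> ?D"
      using p p_eq Suc insert_labeled_block_iff[of X B xs ys] by simp
    then show "p \<in> ?ins ` ?D" by (rule rev_image_eqI) (simp add: p_eq)
  qed
  then have "card {p \<in> labeled_partitions_on m A L r. X \<in> set (snd p)} = card ?D"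
    using card_image[OF inj] by simp
  then show ?thesis using Suc by (simp add: card_cartesian_product)
qed

definition insert_into_block :: "'a \<Rightarrow> 'a set \<Rightarrow> 'a set \<Rightarrow> 'a set" where
  "insert_into_block a X Y = (if Y = X then insert a Y else Y)"

lemma insert_into_block_in_labeled_partitions_on:
  assumes p: "p \<in> labeled_partitions_on m A L r" and X: "X \<in> blocks p" "card X < m"
    and A: "finite A" "a \<notin> A"
  shows "map_blocks (insert_into_block a X) p \<in> labeled_partitions_on m (insert a A) L r"
    and "{a} \<notin> blocks (map_blocks (insert_into_block a X) p)"
proof -
  let ?f = "insert_into_block a X"
  have a_notin: "a \<notin> Y" if "Y \<in> blocks p" for Y
    using labeled_partitions_on_block[OF p that] A(2) by blast
  have X_sub: "X \<subseteq> A" "X \<noteq> {}" using labeled_partitions_on_block[OF p X(1)] by auto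
  have image_eq: "?f ` blocks p = insert (insert a X) (blocks p - {X})"
    using X(1) by (auto simp: insert_into_block_def)
  have nin: "insert a X \<notin> blocks p - {X}" using a_notin by blast
  have "partition_on (insert a A - insert a X) (blocks p - {X})"
    using partition_on_Diff_block[OF X(1) labeled_partitions_on_partition_on[OF p]] A(2) by simp
  then have part: "partition_on (insert a A) (?f ` blocks p)"
    unfolding image_eq partition_on_insert_iff[OF nin] using X_sub by auto
  have "inj_on ?f (blocks p)"
    by (rule inj_on_inverseI[where g = "\<lambda>Y. Y - {a}"])
      (use a_notin in \<open>auto simp: insert_into_block_def\<close>)
  moreover have "card (?f Y) \<le> m" if "Y \<in> blocks p" for Y
    using labeled_partitions_on_card_block[OF p that] X(2) finite_subset[OF X_sub(1) A(1)]
    by (auto simp: insert_into_block_def card_insert_if)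
  ultimately show "map_blocks ?f p \<in> labeled_partitions_on m (insert a A) L r"
    using map_blocks_in_labeled_partitions_on[OF p _ part] by blast
  show "{a} \<notin> blocks (map_blocks ?f p)"
    using a_notin X_sub(2) by (auto simp: insert_into_block_def)
qed

lemma remove_from_blocks_in_labeled_partitions_on:
  assumes q: "q \<in> labeled_partitions_on m (insert a A) L r" "{a} \<notin> blocks q"
    and Y0: "Y0 \<in> blocks q" "a \<in> Y0" and A: "finite A" "a \<notin> A"
  defines "X \<equiv> Y0 - {a}"
  shows "map_blocks (\<lambda>Y. Y - {a}) q \<in> labeled_partitions_on m A L r"
    and "X \<in> blocks (map_blocks (\<lambda>Y. Y - {a}) q)" and "card X < m"
    and "map_blocks (insert_into_block a X) (map_blocks (\<lambda>Y. Y - {a}) q) = q"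
proof -
  let ?g = "\<lambda>Y. Y - {a}"
  have others: "a \<notin> Y \<and> Y \<noteq> X" if "Y \<in> blocks q" "Y \<noteq> Y0" for Y
  proof -
    have "Y \<inter> Y0 = {}"
      using partition_onD2[OF labeled_partitions_on_partition_on[OF q(1)]] that Y0(1)
      by (auto simp: disjoint_def)
    moreover have "Y \<noteq> {}" using labeled_partitions_on_block[OF q(1) that(1)] by blast
    ultimately show ?thesis using Y0(2) unfolding X_def by blast
  qed
  have Y0_sub: "Y0 \<subseteq> insert a A" "Y0 \<noteq> {a}" "finite Y0"
    using labeled_partitions_on_block[OF q(1) Y0(1)] q(2) Y0(1) A(1) finite_subset by auto
  have X_sub: "X \<subseteq> A" "X \<noteq> {}" using Y0_sub Y0(2) A(2) unfolding X_def by auto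
  have cancel: "insert_into_block a X (?g Y) = Y" if "Y \<in> blocks q" for Y
    using others[OF that] Y0(2) by (cases "Y = Y0") (auto simp: insert_into_block_def X_def)
  then show "map_blocks (insert_into_block a X) (map_blocks ?g q) = q"
    by (rule map_blocks_cancel)
  have image_eq: "?g ` blocks q = insert X (blocks q - {Y0})"
  proof -
    have "?g ` blocks q = insert (?g Y0) (?g ` (blocks q - {Y0}))" using Y0(1) by blast
    also have "?g ` (blocks q - {Y0}) = blocks q - {Y0}"
      using others by (auto intro!: image_cong[where g = id, simplified])
    finally show ?thesis unfolding X_def .
  qed
  have nin: "X \<notin> blocks q - {Y0}" using others by blast
  have "partition_on (insert a A - Y0) (blocks q - {Y0})"
    using partition_on_Diff_block[OF Y0(1) labeled_partitions_on_partition_on[OF q(1)]] .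
  moreover have "insert a A - Y0 = A - X" using A(2) Y0(2) unfolding X_def by auto
  ultimately have part: "partition_on A (?g ` blocks q)"
    unfolding image_eq partition_on_insert_iff[OF nin] using X_sub by auto
  have "inj_on ?g (blocks q)"
    using cancel by (rule inj_on_inverseI)
  moreover have "card (?g Y) \<le> m" if "Y \<in> blocks q" for Y
  proof -
    have "finite Y" using labeled_partitions_on_block[OF q(1) that] A(1) finite_subset by auto
    then show ?thesis
      using card_Diff1_le[of Y a] labeled_partitions_on_card_block[OF q(1) that] by linarith
  qed
  ultimately show "map_blocks ?g q \<in> labeled_partitions_on m A L r"
    using map_blocks_in_labeled_partitions_on[OF q(1) _ part] by blast
  show "X \<in> blocks (map_blocks ?g q)" using Y0(1) unfolding X_def by simp
  have "card X < card Y0" unfolding X_def using Y0_sub(3) Y0(2) by (rule card_Diff1_less)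
  then show "card X < m" using labeled_partitions_on_card_block[OF q(1) Y0(1)] by linarith
qed

lemma remove_from_blocks_insert_into_block:
  assumes "\<forall>Y \<in> blocks p. a \<notin> Y"
  shows "map_blocks (\<lambda>Y. Y - {a}) (map_blocks (insert_into_block a X) p) = p"
  by (rule map_blocks_cancel) (use assms in \<open>auto simp: insert_into_block_def\<close>)

lemma map_blocks_insert_into_block_inject:
  assumes a: "\<forall>Y \<in> blocks p. a \<notin> Y" "\<forall>Y \<in> blocks p'. a \<notin> Y"
    and X: "X \<in> blocks p" "X' \<in> blocks p'"
    and eq: "map_blocks (insert_into_block a X) p = map_blocks (insert_into_block a X') p'"
  shows "p = p' \<and> X = X'"
proof -
  have "p = p'"
    using remove_from_blocks_insert_into_block[OF a(1), of X]
      remove_from_blocks_insert_into_block[OF a(2), of X'] eq by simp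
  have "insert a X \<in> insert_into_block a X ` blocks p"
    by (rule image_eqI[of _ _ X]) (simp_all add: insert_into_block_def X(1))
  then have "insert a X \<in> insert_into_block a X' ` blocks p'"
    using eq by (metis blocks_map_blocks)
  then obtain Y where "Y \<in> blocks p'" "insert a X = insert_into_block a X' Y" by blast
  then have "insert a X = insert a X'"
    using a(2) by (cases "Y = X'") (auto simp: insert_into_block_def)
  then have "X = X'" using insert_ident[of a X X'] a X by simp
  with \<open>p = p'\<close> show ?thesis ..
qed

lemma card_labeled_partitions_on_insert_without_singleton:
  assumes A: "finite A" "a \<notin> A"
  shows "card {q \<in> labeled_partitions_on m (insert a A) L r. {a} \<notin> blocks q} =
         card (SIGMA p : labeled_partitions_on m A L r. {X \<in> blocks p. card X < m})"
proof -
  let ?F = "\<lambda>(p, X). map_blocks (insert_into_block a X) p"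
  let ?Q = "SIGMA p : labeled_partitions_on m A L r. {X \<in> blocks p. card X < m}"
  have a_notin: "\<forall>Y \<in> blocks p. a \<notin> Y" if "p \<in> labeled_partitions_on m A L r" for p
    using labeled_partitions_on_block[OF that] A(2) by blast
  have F_inj: "p = p' \<and> X = X'"
    if "(p, X) \<in> ?Q" "(p', X') \<in> ?Q" and "?F (p, X) = ?F (p', X')" for p X p' X'
  proof -
    have "p \<in> labeled_partitions_on m A L r" "p' \<in> labeled_partitions_on m A L r"
      "X \<in> blocks p" "X' \<in> blocks p'" using that(1,2) by auto
    then show ?thesis
      using map_blocks_insert_into_block_inject[OF a_notin a_notin] that(3) by simp
  qed
  have img: "?F ` ?Q = {q \<in> labeled_partitions_on m (insert a A) L r. {a} \<notin> blocks q}"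
  proof (intro equalityI subsetI)
    fix q assume "q \<in> ?F ` ?Q"
    then obtain p X where "p \<in> labeled_partitions_on m A L r" "X \<in> blocks p" "card X < m"
      and "q = map_blocks (insert_into_block a X) p" by auto
    then show "q \<in> {q \<in> labeled_partitions_on m (insert a A) L r. {a} \<notin> blocks q}"
      using insert_into_block_in_labeled_partitions_on[OF _ _ _ A] by simp
  next
    fix q assume "q \<in> {q \<in> labeled_partitions_on m (insert a A) L r. {a} \<notin> blocks q}"
    then have q: "q \<in> labeled_partitions_on m (insert a A) L r" "{a} \<notin> blocks q" by auto
    have "a \<in> \<Union>(blocks q)"
      using partition_onD1[OF labeled_partitions_on_partition_on[OF q(1)]] insertI1 by metis
    then obtain Y0 where Y0: "Y0 \<in> blocks q" "a \<in> Y0" by blast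
    note remove = remove_from_blocks_in_labeled_partitions_on[OF q Y0 A]
    have "(map_blocks (\<lambda>Y. Y - {a}) q, Y0 - {a}) \<in> ?Q" using remove(1-3) by simp
    moreover have "q = ?F (map_blocks (\<lambda>Y. Y - {a}) q, Y0 - {a})" using remove(4) by simp
    ultimately show "q \<in> ?F ` ?Q" by (rule rev_image_eqI)
  qed
  have "inj_on ?F ?Q"
  proof (rule inj_onI)
    fix x y assume "x \<in> ?Q" "y \<in> ?Q" "?F x = ?F y"
    then show "x = y" using F_inj[of "fst x" "snd x" "fst y" "snd y"] by (simp add: prod_eq_iff)
  qed
  then have "card (?F ` ?Q) = card ?Q" by (rule card_image)
  then show ?thesis unfolding img .
qed

lemma double_counting_subsets_of_card:
  assumes "finite P" "finite A" "\<And>p. p \<in> P \<Longrightarrow> G p \<subseteq> Pow A"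
  shows "(\<Sum>p\<in>P. card {X \<in> G p. card X = m}) = (\<Sum>X | X \<subseteq> A \<and> card X = m. card {p \<in> P. X \<in> G p})"
proof -
  have "finite {X. X \<subseteq> A \<and> card X = m}" using assms(2) by simp
  have "card {X \<in> G p. card X = m} = card {X \<in> {X. X \<subseteq> A \<and> card X = m}. X \<in> G p}" if "p \<in> P" for p
    using assms(3)[OF that] by (intro arg_cong[where f = card]) blast
  then have "(\<Sum>p\<in>P. card {X \<in> G p. card X = m}) =
             (\<Sum>p\<in>P. \<Sum>X \<in> {X \<in> {X. X \<subseteq> A \<and> card X = m}. X \<in> G p}. 1)"
    by simp
  also have "\<dots> = (\<Sum>X | X \<subseteq> A \<and> card X = m. \<Sum>p \<in> {p \<in> P. X \<in> G p}. 1)"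
    by (rule sum.swap_restrict) (use assms(1) \<open>finite {X. X \<subseteq> A \<and> card X = m}\<close> in auto)
  finally show ?thesis by simp
qed

lemma card_blocks_split_by_size:
  assumes p: "p \<in> labeled_partitions_on m A L r"
  shows "card {X \<in> blocks p. card X < m} + card {X \<in> fst p. card X = m}
           + card {X \<in> set (snd p). card X = m} = L + r"
proof -
  let ?S = "{X \<in> blocks p. card X < m}"
  let ?E1 = "{X \<in> fst p. card X = m}" and ?E2 = "{X \<in> set (snd p). card X = m}"
  have fin: "finite (fst p)" and disj: "fst p \<inter> set (snd p) = {}"
    using p by (auto simp: labeled_partitions_on_def)
  have "blocks p = ?S \<union> (?E1 \<union> ?E2)"
    using labeled_partitions_on_card_block[OF p] by (cases p) force
  moreover have "card (?E1 \<union> ?E2) = card ?E1 + card ?E2"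
    by (rule card_Un_disjoint) (use fin disj in auto)
  moreover have "card (?S \<union> (?E1 \<union> ?E2)) = card ?S + card (?E1 \<union> ?E2)"
    by (rule card_Un_disjoint) (use fin in \<open>(cases p, auto)\<close>)
  ultimately show ?thesis using card_blocks[OF p] by simp
qed

lemma sum_card_small_blocks:
  assumes A: "finite A" and m: "m \<ge> 1"
  shows "(\<Sum>p\<in>labeled_partitions_on m A L (Suc r). card {X \<in> blocks p. card X < m})
       + (\<Sum>X | X \<subseteq> A \<and> card X = m. card (labeled_partitions_on m (A - X) L r))
       + (\<Sum>X | X \<subseteq> A \<and> card X = m. L * card (labeled_partitions_on m (A - X) (L - 1) (Suc r)))
       = (L + Suc r) * card (labeled_partitions_on m A L (Suc r))"
proof -
  let ?Q = "labeled_partitions_on m A L (Suc r)"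
  let ?Xs = "{X. X \<subseteq> A \<and> card X = m}"
  have "finite ?Q" using A by (rule finite_labeled_partitions_on)
  have Q_blocks: "fst p \<subseteq> Pow A" "set (snd p) \<subseteq> Pow A" if "p \<in> ?Q" for p
    using labeled_partitions_on_block[OF that] by (cases p; auto)+
  have m_subset: "X \<subseteq> A" "X \<noteq> {}" "card X \<le> m" if "X \<in> ?Xs" for X
    using that m by auto
  have unlabeled_sum:
    "(\<Sum>X\<in>?Xs. card (labeled_partitions_on m (A - X) L r)) = (\<Sum>p\<in>?Q. card {X \<in> fst p. card X = m})"
  proof -
    have "(\<Sum>X\<in>?Xs. card (labeled_partitions_on m (A - X) L r)) = (\<Sum>X\<in>?Xs. card {p \<in> ?Q. X \<in> fst p})"
      using card_labeled_partitions_on_with_unlabeled_block[OF m_subset] by simp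
    also have "\<dots> = (\<Sum>p\<in>?Q. card {X \<in> fst p. card X = m})"
      by (rule double_counting_subsets_of_card[symmetric]) (use \<open>finite ?Q\<close> A(1) Q_blocks in auto)
    finally show ?thesis .
  qed
  have labeled_sum: "(\<Sum>X\<in>?Xs. L * card (labeled_partitions_on m (A - X) (L - 1) (Suc r)))
      = (\<Sum>p\<in>?Q. card {X \<in> set (snd p). card X = m})"
  proof -
    have "(\<Sum>X\<in>?Xs. L * card (labeled_partitions_on m (A - X) (L - 1) (Suc r)))
        = (\<Sum>X\<in>?Xs. card {p \<in> ?Q. X \<in> set (snd p)})"
      using card_labeled_partitions_on_with_labeled_block[OF m_subset] by simp
    also have "\<dots> = (\<Sum>p\<in>?Q. card {X \<in> set (snd p). card X = m})"
      by (rule double_counting_subsets_of_card[symmetric]) (use \<open>finite ?Q\<close> A(1) Q_blocks in auto)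
    finally show ?thesis .
  qed
  have "(\<Sum>p\<in>?Q. card {X \<in> blocks p. card X < m}) + (\<Sum>p\<in>?Q. card {X \<in> fst p. card X = m})
      + (\<Sum>p\<in>?Q. card {X \<in> set (snd p). card X = m}) = (L + Suc r) * card ?Q"
    using card_blocks_split_by_size[of _ m A L "Suc r"] by (simp flip: sum.distrib)
  then show ?thesis unfolding unlabeled_sum labeled_sum .
qed

lemma card_labeled_partitions_on_insert:
  assumes A: "finite A" "a \<notin> A" and m: "m \<ge> 1"
  shows "card (labeled_partitions_on m (insert a A) L (Suc r))
       + (\<Sum>X | X \<subseteq> A \<and> card X = m. card (labeled_partitions_on m (A - X) L r)
                 + L * card (labeled_partitions_on m (A - X) (L - 1) (Suc r)))
       = card (labeled_partitions_on m A L r) + L * card (labeled_partitions_on m A (L - 1) (Suc r))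
       + (L + Suc r) * card (labeled_partitions_on m A L (Suc r))"
proof -
  let ?P = "labeled_partitions_on m (insert a A) L (Suc r)"
  let ?PA = "{p \<in> ?P. {a} \<in> fst p}" and ?PB = "{p \<in> ?P. {a} \<in> set (snd p)}"
    and ?PC = "{p \<in> ?P. {a} \<notin> blocks p}"
  let ?Q = "labeled_partitions_on m A L (Suc r)"
  have "finite ?P" "finite ?Q" using A(1) by (simp_all add: finite_labeled_partitions_on)
  have "?P = (?PA \<union> ?PB) \<union> ?PC" by (auto elim: blocks.elims)
  then have "card ?P = card ((?PA \<union> ?PB) \<union> ?PC)" by (rule arg_cong)
  also have "\<dots> = card (?PA \<union> ?PB) + card ?PC"
    by (rule card_Un_disjoint) (use \<open>finite ?P\<close> in auto)
  also have "card (?PA \<union> ?PB) = card ?PA + card ?PB"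
    by (rule card_Un_disjoint) (use \<open>finite ?P\<close> in \<open>auto simp: labeled_partitions_on_def\<close>)
  finally have "card ?P = card ?PA + card ?PB + card ?PC" .
  also have "card ?PA = card (labeled_partitions_on m A L r)"
    using card_labeled_partitions_on_with_unlabeled_block[of "{a}" "insert a A" m L r] m A(2)
    by simp
  also have "card ?PB = L * card (labeled_partitions_on m A (L - 1) (Suc r))"
    using card_labeled_partitions_on_with_labeled_block[of "{a}" "insert a A" m L "Suc r"] m A(2)
    by simp
  also have "card ?PC = (\<Sum>p\<in>?Q. card {X \<in> blocks p. card X < m})"
    unfolding card_labeled_partitions_on_insert_without_singleton[OF A]
    by (rule card_SigmaI) (use \<open>finite ?Q\<close> in \<open>auto elim: blocks.elims simp: labeled_partitions_on_def\<close>)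
  finally have P_eq: "card ?P = card (labeled_partitions_on m A L r)
      + L * card (labeled_partitions_on m A (L - 1) (Suc r)) + (\<Sum>p\<in>?Q. card {X \<in> blocks p. card X < m})" .
  then show ?thesis
    using sum_card_small_blocks[OF A(1) m, of L r] unfolding sum.distrib by linarith
qed

(* The factor L hides the junk value S_le m N 0 r = S_le m N 1 r. *)
lemma mult_S_le_eq_card_labeled_partitions_on:
  assumes "finite A" "card A = N"
  shows "L * S_le m N L r = L * card (labeled_partitions_on m A (L - 1) r)"
  using S_le_eq_card_labeled_partitions_on[OF assms] by (cases L) simp_all

lemma S_le_Suc_recurrence:
  assumes m: "m \<ge> 1"
  shows "S_le m (Suc N) (Suc L) (Suc r)
       + (N choose m) * (S_le m (N - m) (Suc L) r + L * S_le m (N - m) L (Suc r))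
       = S_le m N (Suc L) r + L * S_le m N L (Suc r) + (L + Suc r) * S_le m N (Suc L) (Suc r)"
proof -
  let ?A = "{1..N}" and ?Xs = "{X. X \<subseteq> {1..N} \<and> card X = m}"
  have A: "finite ?A" "card ?A = N" "Suc N \<notin> ?A" "insert (Suc N) ?A = {1..Suc N}"
    "card {1..Suc N} = Suc N"
    by (auto simp: atLeastAtMostSuc_conv)
  have "(\<Sum>X\<in>?Xs. card (labeled_partitions_on m (?A - X) L r)
            + L * card (labeled_partitions_on m (?A - X) (L - 1) (Suc r)))
      = (\<Sum>X\<in>?Xs. S_le m (N - m) (Suc L) r + L * S_le m (N - m) L (Suc r))"
  proof (rule sum.cong)
    fix X assume "X \<in> ?Xs"
    then have X: "finite (?A - X)" "card (?A - X) = N - m"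
      using finite_subset[of X ?A] by (simp_all add: card_Diff_subset)
    show "card (labeled_partitions_on m (?A - X) L r)
            + L * card (labeled_partitions_on m (?A - X) (L - 1) (Suc r))
          = S_le m (N - m) (Suc L) r + L * S_le m (N - m) L (Suc r)"
      unfolding S_le_eq_card_labeled_partitions_on[OF X]
        mult_S_le_eq_card_labeled_partitions_on[OF X] ..
  qed simp
  also have "\<dots> = (N choose m) * (S_le m (N - m) (Suc L) r + L * S_le m (N - m) L (Suc r))"
    using n_subsets[of ?A m] by simp
  finally show ?thesis
    using card_labeled_partitions_on_insert[OF A(1,3) m, of L r]
    unfolding A(4) S_le_eq_card_labeled_partitions_on[OF A(1,2)]
      mult_S_le_eq_card_labeled_partitions_on[OF A(1,2)]
      S_le_eq_card_labeled_partitions_on[OF finite_atLeastAtMost A(5)]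
    by simp
qed

theorem mainTheorem4:
  fixes n m k r :: nat
  assumes "n \<ge> 1" and "m \<ge> 1" and "k \<ge> 1" and "r \<ge> 1"
  shows "int (S_le m n k r) =
           int (S_le m (n - 1) k (r - 1))
         + int (k - 1) * int (S_le m (n - 1) (k - 1) r)
         + int (k + r - 1) * int (S_le m (n - 1) k r)
         - int ((n - 1) choose m) * int (S_le m (n - m - 1) k (r - 1))
         - int (k - 1) * int ((n - 1) choose m) * int (S_le m (n - m - 1) (k - 1) r)"
proof -
  obtain N L r' where "n = Suc N" "k = Suc L" "r = Suc r'"
    using assms(1,3,4) by (metis Suc_pred' less_eq_Suc_le One_nat_def)
  then have "int (S_le m n k r) + int ((n - 1) choose m) * int (S_le m (n - m - 1) k (r - 1))
        + int (k - 1) * int ((n - 1) choose m) * int (S_le m (n - m - 1) (k - 1) r)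
      = int (S_le m (n - 1) k (r - 1)) + int (k - 1) * int (S_le m (n - 1) (k - 1) r)
        + int (k + r - 1) * int (S_le m (n - 1) k r)"
    using arg_cong[OF S_le_Suc_recurrence[OF assms(2), of N L r'], of int]
    by (simp add: algebra_simps)
  then show ?thesis by linarith
qed

end
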